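(* Let $\eta>0$, let $\ell_i^{(1)},\dots,\ell_i^{(T)}\in\mathbb{R}^{n_i}$ be an arbitrary sequence of vectors (with $\ell_i^{(0)}=0$), and let $x_i^{(1)},\dots,x_i^{(T)}$ be the Optimistic Hedge iterates with step size $\eta$ on this sequence. Define $\tilde x_i^{(0)}$ to be the uniform distribution on $[n_i]$ and, for $t\in[T]$, $\tilde x_i^{(t)}(j)=\frac{x_i^{(t)}(j)\exp(-\eta(\ell_i^{(t)}(j)-\ell_i^{(t-1)}(j)))}{\sum_kx_i^{(t)}(k)\exp(-\eta(\ell_i^{(t)}(k)-\ell_i^{(t-1)}(k)))}$. Then for every $x^\star\in\Delta^{n_i}$, $$\sum_{t=1}^T\langle x_i^{(t)}-x^\star,\ell_i^{(t)}\rangle\le\frac{\ln n_i}{\eta}+\sum_{t=1}^T\|x_i^{(t)}-\tilde x_i^{(t)}\|^*_{x_i^{(t)}}\sqrt{\mathrm{Var}_{x_i^{(t)}}(\ell_i^{(t)}-\ell_i^{(t-1)})}-\frac1\eta\sum_{t=1}^T\mathrm{KL}(\tilde x_i^{(t)};x_i^{(t)})-\frac1\eta\sum_{t=1}^T\mathrm{KL}(x_i^{(t)};\tilde x_i^{(t-1)}).$$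
   Context: Optimistic Hedge: $x_i^{(1)}$ uniform on $[n_i]$, $x_i^{(t+1)}(j)\propto x_i^{(t)}(j)\exp(-\eta(2\ell_i^{(t)}(j)-\ell_i^{(t-1)}(j)))$. For full-support $P\in\Delta^n$ and $v\in\mathbb{R}^n$, $\|v\|^*_P=\sqrt{\sum_jv(j)^2/P(j)}$ and $\mathrm{Var}_P(v)=\sum_jP(j)(v(j)-\langle P,v\rangle)^2$. $\mathrm{KL}(P;Q)=\sum_jP(j)\ln(P(j)/Q(j))$ with the natural logarithm; $\ln n_i$ is the natural logarithm. *)

theory Defs
  imports "HOL-Analysis.Analysis"
begin

text \<open>Actions are indexed by {..<n}. Distributions and vectors are functions nat => real;
  only values on {..<n} matter. A loss sequence is l :: nat => nat => real, l t j = loss of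
  action j at round t.\<close>

definition uniform_dist :: "nat \<Rightarrow> nat \<Rightarrow> real" where
  "uniform_dist n = (\<lambda>j. 1 / real n)"

definition prob_simplex :: "nat \<Rightarrow> (nat \<Rightarrow> real) set" where
  "prob_simplex n = {p. (\<forall>j<n. 0 \<le> p j) \<and> (\<Sum>j<n. p j) = 1}"

definition reweight :: "nat \<Rightarrow> (nat \<Rightarrow> real) \<Rightarrow> (nat \<Rightarrow> real) \<Rightarrow> nat \<Rightarrow> real" where
  "reweight n P w = (\<lambda>j. P j * exp (- w j) / (\<Sum>k<n. P k * exp (- w k)))"

text \<open>oh_aux eta n l k is the Optimistic Hedge iterate x^(k+1).\<close>
fun oh_aux :: "real \<Rightarrow> nat \<Rightarrow> (nat \<Rightarrow> nat \<Rightarrow> real) \<Rightarrow> nat \<Rightarrow> nat \<Rightarrow> real" where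
  "oh_aux eta n l 0 = uniform_dist n"
| "oh_aux eta n l (Suc k) =
     reweight n (oh_aux eta n l k) (\<lambda>j. eta * (2 * l (Suc k) j - l k j))"

definition opt_hedge :: "real \<Rightarrow> nat \<Rightarrow> (nat \<Rightarrow> nat \<Rightarrow> real) \<Rightarrow> nat \<Rightarrow> nat \<Rightarrow> real" where
  "opt_hedge eta n l t = oh_aux eta n l (t - 1)"

definition opt_hedge_tilde :: "real \<Rightarrow> nat \<Rightarrow> (nat \<Rightarrow> nat \<Rightarrow> real) \<Rightarrow> nat \<Rightarrow> nat \<Rightarrow> real" where
  "opt_hedge_tilde eta n l t = (if t = 0 then uniform_dist n
     else reweight n (opt_hedge eta n l t) (\<lambda>j. eta * (l t j - l (t - 1) j)))"

definition inner_n :: "nat \<Rightarrow> (nat \<Rightarrow> real) \<Rightarrow> (nat \<Rightarrow> real) \<Rightarrow> real" where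
  "inner_n n P v = (\<Sum>j<n. P j * v j)"

definition dual_norm :: "nat \<Rightarrow> (nat \<Rightarrow> real) \<Rightarrow> (nat \<Rightarrow> real) \<Rightarrow> real" where
  "dual_norm n P v = sqrt (\<Sum>j<n. (v j)\<^sup>2 / P j)"

definition var_n :: "nat \<Rightarrow> (nat \<Rightarrow> real) \<Rightarrow> (nat \<Rightarrow> real) \<Rightarrow> real" where
  "var_n n P v = (\<Sum>j<n. P j * (v j - inner_n n P v)\<^sup>2)"

definition KL_n :: "nat \<Rightarrow> (nat \<Rightarrow> real) \<Rightarrow> (nat \<Rightarrow> real) \<Rightarrow> real" where
  "KL_n n P Q = (\<Sum>j<n. P j * ln (P j / Q j))"

end

theory Submission
  imports Defs
begin

text \<open>Write \<open>x t\<close> and \<open>xt t\<close> for the Optimistic Hedge iterates and their tilde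
  companions. Both \<open>x t\<close> and \<open>xt t\<close> arise from \<open>xt (t - 1)\<close> by a single multiplicative
  reweighting, by \<open>\<eta> l (t - 1)\<close> and \<open>\<eta> l t\<close> respectively. For a reweighting
  \<open>Q \<propto> P exp (- w)\<close> the three-point identity \<open>\<langle>Q - y, w\<rangle> = KL(y;P) - KL(y;Q) - KL(Q;P)\<close>
  holds; applied to both reweightings it splits the regret of round \<open>t\<close> into the telescoping
  term \<open>KL(x\<^sup>*; xt (t - 1)) - KL(x\<^sup>*; xt t)\<close>, the two negative KL terms, and
  \<open>\<langle>x t - xt t, l t - l (t - 1)\<rangle>\<close>. As \<open>x t - xt t\<close> sums to zero, the loss difference may be
  centred before applying Cauchy-Schwarz in the \<open>x t\<close>-weighted norm. The telescoping sum is at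
  most \<open>KL(x\<^sup>*; uniform) \<le> ln n\<close>.\<close>

definition full_support :: "nat \<Rightarrow> (nat \<Rightarrow> real) \<Rightarrow> bool" where
  "full_support n P \<longleftrightarrow> (\<forall>j<n. P j > 0)"

lemma full_support_uniform_dist: "n \<ge> 1 \<Longrightarrow> full_support n (uniform_dist n)"
  unfolding full_support_def uniform_dist_def by auto

lemma uniform_dist_in_prob_simplex: "n \<ge> 1 \<Longrightarrow> uniform_dist n \<in> prob_simplex n"
  unfolding prob_simplex_def uniform_dist_def by auto

lemma reweight_normalizer_pos:
  assumes "full_support n P" "n \<ge> 1"
  shows "(\<Sum>k<n. P k * exp (- w k)) > 0"
  using assms unfolding full_support_def by (intro sum_pos) (auto simp: lessThan_empty_iff)

lemma full_support_reweight:
  assumes "full_support n P" "n \<ge> 1"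
  shows "full_support n (reweight n P w)"
  using reweight_normalizer_pos[OF assms, of w] assms(1)
  unfolding full_support_def reweight_def by auto

lemma reweight_in_prob_simplex:
  assumes "full_support n P" "n \<ge> 1"
  shows "reweight n P w \<in> prob_simplex n"
  using full_support_reweight[OF assms, of w] reweight_normalizer_pos[OF assms, of w]
  unfolding prob_simplex_def full_support_def
  by (auto simp: reweight_def sum_divide_distrib[symmetric] less_imp_le)

lemma ln_reweight_div:
  assumes "full_support n P" "n \<ge> 1" "j < n"
  shows "ln (reweight n P w j / P j) = - w j - ln (\<Sum>k<n. P k * exp (- w k))"
proof -
  have "P j > 0" using assms unfolding full_support_def by auto
  then have "reweight n P w j / P j = exp (- w j) / (\<Sum>k<n. P k * exp (- w k))"
    unfolding reweight_def by simp
  then show ?thesis using reweight_normalizer_pos[OF assms(1,2), of w] by (simp add: ln_div)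
qed

lemma reweight_reweight:
  assumes "full_support n P" "n \<ge> 1"
  shows "reweight n (reweight n P a) b = reweight n P (\<lambda>j. a j + b j)"
proof
  fix j
  define Z where "Z = (\<Sum>k<n. P k * exp (- a k))"
  have "Z > 0" unfolding Z_def by (rule reweight_normalizer_pos[OF assms])
  moreover have "(\<Sum>k<n. P k * exp (- a k) / Z * exp (- b k))
      = (\<Sum>k<n. P k * exp (- (a k + b k))) / Z"
    by (simp add: sum_divide_distrib exp_add[symmetric] mult.assoc)
  ultimately show "reweight n (reweight n P a) b j = reweight n P (\<lambda>j. a j + b j) j"
    unfolding reweight_def Z_def[symmetric] by (simp add: exp_add[symmetric] mult.assoc)
qed

lemma reweight_zero:
  assumes "(\<Sum>j<n. P j) = 1"
  shows "reweight n P (\<lambda>j. 0) = P"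
  using assms unfolding reweight_def by simp

lemma mult_ln_div_split:
  fixes y p q :: real
  assumes "0 \<le> y" "0 < p" "0 < q"
  shows "y * ln (y / p) - y * ln (y / q) = y * ln (q / p)"
proof (cases "y = 0")
  case False
  with assms have "y > 0" by simp
  with assms show ?thesis by (simp add: ln_div algebra_simps)
qed simp

lemma KL_n_three_point:
  fixes w :: "nat \<Rightarrow> real"
  assumes P: "full_support n P" and n: "n \<ge> 1" and y: "y \<in> prob_simplex n"
  defines "Q \<equiv> reweight n P w"
  shows "(\<Sum>j<n. (Q j - y j) * w j) = KL_n n y P - KL_n n y Q - KL_n n Q P"
proof -
  define Z where "Z = (\<Sum>k<n. P k * exp (- w k))"
  have Q1: "(\<Sum>j<n. Q j) = 1"
    using reweight_in_prob_simplex[OF P n] unfolding Q_def prob_simplex_def by simp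
  have y1: "(\<Sum>j<n. y j) = 1" using y unfolding prob_simplex_def by simp
  have "y j * ln (y j / P j) - y j * ln (y j / Q j) - Q j * ln (Q j / P j)
      = (y j - Q j) * ln (Q j / P j)" if "j < n" for j
    using that P full_support_reweight[OF P n, of w] y mult_ln_div_split[of "y j" "P j" "Q j"]
    unfolding Q_def full_support_def prob_simplex_def by (simp add: left_diff_distrib)
  then have "KL_n n y P - KL_n n y Q - KL_n n Q P = (\<Sum>j<n. (y j - Q j) * ln (Q j / P j))"
    unfolding KL_n_def by (simp add: sum_subtractf[symmetric])
  also have "\<dots> = (\<Sum>j<n. (y j - Q j) * (- w j - ln Z))"
    using ln_reweight_div[OF P n] unfolding Q_def Z_def by simp
  also have "\<dots> = (\<Sum>j<n. (Q j - y j) * w j) - ln Z * ((\<Sum>j<n. y j) - (\<Sum>j<n. Q j))"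
    by (simp add: algebra_simps sum_subtractf sum_distrib_left sum.distrib)
  finally show ?thesis using y1 Q1 by simp
qed

lemma diff_le_mult_ln_div:
  fixes y q :: real
  assumes "0 \<le> y" "0 < q"
  shows "y - q \<le> y * ln (y / q)"
proof (cases "y = 0")
  case False
  with assms have "y > 0" by simp
  then have "y * ln (q / y) \<le> y * (q / y - 1)"
    using assms by (intro mult_left_mono ln_le_minus_one) auto
  with \<open>y > 0\<close> assms(2) show ?thesis by (simp add: ln_div algebra_simps)
qed (use assms in simp)

lemma KL_n_nonneg:
  assumes "full_support n Q" "Q \<in> prob_simplex n" "y \<in> prob_simplex n"
  shows "KL_n n y Q \<ge> 0"
proof -
  have "0 = (\<Sum>j<n. y j - Q j)"
    using assms(2,3) unfolding prob_simplex_def by (simp add: sum_subtractf)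
  also have "\<dots> \<le> KL_n n y Q"
    unfolding KL_n_def using assms(1,3) unfolding full_support_def prob_simplex_def
    by (intro sum_mono diff_le_mult_ln_div) auto
  finally show ?thesis .
qed

lemma KL_n_uniform_dist_le:
  assumes n: "n \<ge> 1" and y: "y \<in> prob_simplex n"
  shows "KL_n n y (uniform_dist n) \<le> ln (real n)"
proof -
  have "y j * ln (y j / uniform_dist n j) \<le> y j * ln (real n)" if j: "j < n" for j
  proof (cases "y j = 0")
    case False
    with y j have yj: "y j > 0" unfolding prob_simplex_def by force
    have "y j \<le> (\<Sum>i<n. y i)" using y j unfolding prob_simplex_def by (intro member_le_sum) auto
    with y have "ln (y j) \<le> 0" using yj unfolding prob_simplex_def by simp
    moreover have "ln (y j / uniform_dist n j) = ln (y j) + ln (real n)"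
      using yj n by (simp add: uniform_dist_def ln_mult)
    ultimately show ?thesis using yj by (simp add: distrib_left mult_nonneg_nonpos)
  qed simp
  then have "KL_n n y (uniform_dist n) \<le> (\<Sum>j<n. y j * ln (real n))"
    unfolding KL_n_def by (intro sum_mono) auto
  also have "\<dots> = ln (real n)" using y by (simp add: prob_simplex_def sum_distrib_right[symmetric])
  finally show ?thesis .
qed

lemma sum_mult_le_dual_norm_var_n:
  assumes P: "full_support n P" and a: "(\<Sum>j<n. a j) = 0"
  shows "(\<Sum>j<n. a j * m j) \<le> dual_norm n P a * sqrt (var_n n P m)"
proof -
  define c where "c = inner_n n P m"
  have P_pos: "\<And>j. j < n \<Longrightarrow> P j > 0" using P unfolding full_support_def by auto
  have "(\<Sum>j<n. a j * m j) = (\<Sum>j<n. (a j / sqrt (P j)) * (sqrt (P j) * (m j - c)))"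
  proof -
    have "(\<Sum>j<n. a j * m j) = (\<Sum>j<n. a j * m j - c * a j)"
      using a by (simp add: sum_subtractf sum_distrib_left[symmetric])
    also have "\<dots> = (\<Sum>j<n. (a j / sqrt (P j)) * (sqrt (P j) * (m j - c)))"
    proof (intro sum.cong refl)
      fix j assume "j \<in> {..<n}"
      then have "sqrt (P j) > 0" using P_pos by simp
      then show "a j * m j - c * a j = a j / sqrt (P j) * (sqrt (P j) * (m j - c))"
        by (simp add: field_simps)
    qed
    finally show ?thesis .
  qed
  also have "\<dots> \<le> sqrt ((\<Sum>j<n. (a j / sqrt (P j))\<^sup>2) * (\<Sum>j<n. (sqrt (P j) * (m j - c))\<^sup>2))"
    by (intro real_le_rsqrt Cauchy_Schwarz_ineq_sum)
  also have "(\<Sum>j<n. (a j / sqrt (P j))\<^sup>2) = (\<Sum>j<n. (a j)\<^sup>2 / P j)"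
    using P_pos by (intro sum.cong) (auto simp: power_divide less_imp_le)
  also have "(\<Sum>j<n. (sqrt (P j) * (m j - c))\<^sup>2) = var_n n P m"
    unfolding var_n_def c_def using P_pos
    by (intro sum.cong) (auto simp: power_mult_distrib less_imp_le)
  finally show ?thesis unfolding dual_norm_def by (simp add: real_sqrt_mult)
qed

lemma full_support_oh_aux: "n \<ge> 1 \<Longrightarrow> full_support n (oh_aux eta n l k)"
  by (induction k) (auto intro: full_support_reweight full_support_uniform_dist)

lemma full_support_opt_hedge: "n \<ge> 1 \<Longrightarrow> full_support n (opt_hedge eta n l t)"
  unfolding opt_hedge_def by (rule full_support_oh_aux)

lemma opt_hedge_in_prob_simplex: "n \<ge> 1 \<Longrightarrow> opt_hedge eta n l t \<in> prob_simplex n"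
  unfolding opt_hedge_def
  by (cases "t - 1")
    (auto intro!: reweight_in_prob_simplex full_support_oh_aux uniform_dist_in_prob_simplex)

lemma full_support_opt_hedge_tilde: "n \<ge> 1 \<Longrightarrow> full_support n (opt_hedge_tilde eta n l t)"
  unfolding opt_hedge_tilde_def
  by (auto intro!: full_support_reweight full_support_opt_hedge full_support_uniform_dist)

lemma opt_hedge_tilde_in_prob_simplex: "n \<ge> 1 \<Longrightarrow> opt_hedge_tilde eta n l t \<in> prob_simplex n"
  unfolding opt_hedge_tilde_def
  by (auto intro!: reweight_in_prob_simplex full_support_opt_hedge uniform_dist_in_prob_simplex)

lemma opt_hedge_eq_reweight_tilde:
  assumes n: "n \<ge> 1" and l0: "\<And>j. l 0 j = 0" and t: "t \<ge> 1"
  shows "opt_hedge eta n l t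
    = reweight n (opt_hedge_tilde eta n l (t - 1)) (\<lambda>j. eta * l (t - 1) j)"
proof (cases "t = 1")
  case True
  with l0 show ?thesis
    using reweight_zero[where P = "uniform_dist n"] uniform_dist_in_prob_simplex[OF n]
    by (simp add: opt_hedge_def opt_hedge_tilde_def prob_simplex_def)
next
  case False
  with t obtain k where k: "t = Suc (Suc k)" by (metis Suc_le_D One_nat_def not0_implies_Suc)
  have "(\<lambda>j. eta * (2 * l (Suc k) j - l k j))
      = (\<lambda>j. eta * (l (Suc k) j - l k j) + eta * l (Suc k) j)"
    by (auto simp: algebra_simps)
  with k show ?thesis
    by (simp add: opt_hedge_def opt_hedge_tilde_def reweight_reweight[OF full_support_oh_aux[OF n] n])
qed

lemma opt_hedge_tilde_eq_reweight_tilde: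
  assumes n: "n \<ge> 1" and l0: "\<And>j. l 0 j = 0" and t: "t \<ge> 1"
  shows "opt_hedge_tilde eta n l t = reweight n (opt_hedge_tilde eta n l (t - 1)) (\<lambda>j. eta * l t j)"
proof -
  have "opt_hedge_tilde eta n l t
      = reweight n (opt_hedge eta n l t) (\<lambda>j. eta * (l t j - l (t - 1) j))"
    using t by (simp add: opt_hedge_tilde_def)
  also have "\<dots> = reweight n (opt_hedge_tilde eta n l (t - 1))
      (\<lambda>j. eta * l (t - 1) j + eta * (l t j - l (t - 1) j))"
    by (simp add: opt_hedge_eq_reweight_tilde[of n l t eta, OF n l0 t]
        reweight_reweight[OF full_support_opt_hedge_tilde[OF n] n])
  finally show ?thesis by (simp add: algebra_simps)
qed

lemma opt_hedge_round_eq: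
  fixes eta :: real
  assumes n: "n \<ge> 1" and l0: "\<And>j. l 0 j = 0" and t: "t \<ge> 1" and y: "y \<in> prob_simplex n"
  defines "x \<equiv> opt_hedge eta n l" and "xt \<equiv> opt_hedge_tilde eta n l"
  shows "eta * inner_n n (\<lambda>j. x t j - y j) (l t)
       = eta * (\<Sum>j<n. (x t j - xt t j) * (l t j - l (t - 1) j))
         + KL_n n y (xt (t - 1)) - KL_n n y (xt t) - KL_n n (xt t) (x t) - KL_n n (x t) (xt (t - 1))"
proof -
  have tilde: "(\<Sum>j<n. (xt t j - y j) * (eta * l t j))
      = KL_n n y (xt (t - 1)) - KL_n n y (xt t) - KL_n n (xt t) (xt (t - 1))"
    using KL_n_three_point[OF full_support_opt_hedge_tilde[OF n] n y]
    by (simp add: xt_def opt_hedge_tilde_eq_reweight_tilde[of n l t eta, OF n l0 t])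
  have hedge: "(\<Sum>j<n. (x t j - xt t j) * (eta * l (t - 1) j))
      = KL_n n (xt t) (xt (t - 1)) - KL_n n (xt t) (x t) - KL_n n (x t) (xt (t - 1))"
    using KL_n_three_point[OF full_support_opt_hedge_tilde[OF n] n
        opt_hedge_tilde_in_prob_simplex[OF n]]
    by (simp add: xt_def x_def opt_hedge_eq_reweight_tilde[of n l t eta, OF n l0 t])
  have "eta * inner_n n (\<lambda>j. x t j - y j) (l t)
      = eta * (\<Sum>j<n. (x t j - xt t j) * (l t j - l (t - 1) j))
        + (\<Sum>j<n. (xt t j - y j) * (eta * l t j)) + (\<Sum>j<n. (x t j - xt t j) * (eta * l (t - 1) j))"
    unfolding inner_n_def sum_distrib_left sum.distrib[symmetric]
    by (intro sum.cong) (auto simp: algebra_simps)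
  then show ?thesis using tilde hedge by simp
qed

lemma opt_hedge_round_le:
  fixes eta :: real
  assumes eta: "eta > 0" and n: "n \<ge> 1" and l0: "\<And>j. l 0 j = 0" and t: "t \<ge> 1"
    and y: "y \<in> prob_simplex n"
  defines "x \<equiv> opt_hedge eta n l" and "xt \<equiv> opt_hedge_tilde eta n l"
  shows "inner_n n (\<lambda>j. x t j - y j) (l t)
       \<le> dual_norm n (x t) (\<lambda>j. x t j - xt t j) * sqrt (var_n n (x t) (\<lambda>j. l t j - l (t - 1) j))
         + (KL_n n y (xt (t - 1)) - KL_n n y (xt t) - KL_n n (xt t) (x t) - KL_n n (x t) (xt (t - 1)))
           / eta"
proof -
  have "(\<Sum>j<n. (x t j - xt t j) * (l t j - l (t - 1) j))
      \<le> dual_norm n (x t) (\<lambda>j. x t j - xt t j) * sqrt (var_n n (x t) (\<lambda>j. l t j - l (t - 1) j))"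
    using opt_hedge_in_prob_simplex[OF n] opt_hedge_tilde_in_prob_simplex[OF n]
    by (intro sum_mult_le_dual_norm_var_n)
      (auto simp: x_def xt_def full_support_opt_hedge[OF n] sum_subtractf prob_simplex_def)
  with opt_hedge_round_eq[where l = l and eta = eta, OF n l0 t y] eta show ?thesis
    unfolding x_def xt_def by (simp add: field_simps)
qed

theorem lemmaA5:
  fixes eta :: real and n T :: nat and l :: "nat \<Rightarrow> nat \<Rightarrow> real"
    and xstar :: "nat \<Rightarrow> real"
  assumes eta_pos: "eta > 0"
    and n_pos: "n \<ge> 1"
    and l0: "\<And>j. l 0 j = 0"
    and xstar: "xstar \<in> prob_simplex n"
  defines "x \<equiv> opt_hedge eta n l"
    and "xt \<equiv> opt_hedge_tilde eta n l"
  shows "(\<Sum>t=1..T. inner_n n (\<lambda>j. x t j - xstar j) (l t))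
         \<le> ln (real n) / eta
           + (\<Sum>t=1..T. dual_norm n (x t) (\<lambda>j. x t j - xt t j)
                         * sqrt (var_n n (x t) (\<lambda>j. l t j - l (t - 1) j)))
           - (1 / eta) * (\<Sum>t=1..T. KL_n n (xt t) (x t))
           - (1 / eta) * (\<Sum>t=1..T. KL_n n (x t) (xt (t - 1)))"
proof -
  define D where "D t = KL_n n xstar (xt t)" for t
  have "(\<Sum>t=1..T. D (t - 1) - D t) = D 0 - D T"
    by (induction T) auto
  also have "\<dots> \<le> ln (real n)"
  proof -
    have "D 0 \<le> ln (real n)"
      using KL_n_uniform_dist_le[OF n_pos xstar] by (simp add: D_def xt_def opt_hedge_tilde_def)
    moreover have "D T \<ge> 0" unfolding D_def xt_def
      by (rule KL_n_nonneg[OF full_support_opt_hedge_tilde[OF n_pos]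
            opt_hedge_tilde_in_prob_simplex[OF n_pos] xstar])
    ultimately show ?thesis by simp
  qed
  finally have "(\<Sum>t=1..T. D (t - 1) - D t) / eta \<le> ln (real n) / eta"
    using eta_pos by (simp add: divide_right_mono)
  moreover have "(\<Sum>t=1..T. inner_n n (\<lambda>j. x t j - xstar j) (l t))
      \<le> (\<Sum>t=1..T. dual_norm n (x t) (\<lambda>j. x t j - xt t j)
                     * sqrt (var_n n (x t) (\<lambda>j. l t j - l (t - 1) j))
         + (D (t - 1) - D t - KL_n n (xt t) (x t) - KL_n n (x t) (xt (t - 1))) / eta)"
    unfolding D_def x_def xt_def
    by (intro sum_mono opt_hedge_round_le[where l = l, OF eta_pos n_pos l0 _ xstar]) auto
  ultimately show ?thesis
    by (simp add: sum.distrib sum_subtractf diff_divide_distrib sum_divide_distrib[symmetric])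
qed

end
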